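(* Consider a graph orientation instance whose graph $G=(V,E)$ is a star with center $v$ and leaf set $H_v=V\setminus\{v\}$, with arbitrary query costs. Let $L$ be the algorithm that queries $v$ and then queries every leaf that is mandatory, and $R$ the algorithm that queries all leaves and then queries $v$ if it is mandatory; so $\mathbb E[L]=c_v+\sum_{u\in H_v}p_uc_u$ and $\mathbb E[R]=p_vc_v+c(H_v)$. If $\mathbb E[L]=\mathbb E[R]$, then $\mathbb E[L]\le\frac43\mathbb E[\mathrm{OPT}]$.
   Context: An instance of the graph orientation problem consists of a graph $G=(V,E)$ and, for each vertex $u$, a query cost $c_u\ge0$ and a continuous distribution $d_u$ with minimal support interval $I_u$; for each edge the two intervals intersect. Weights $w_u\sim d_u$ are independent and querying $u$ reveals $w_u$ at cost $c_u$; $c(S)=\sum_{u\in S}c_u$. For a realization, $Q$ is a feasible query set if knowing $w_u$ for $u\in Q$ and only the intervals for unqueried vertices suffices to identify, for every edge, its endpoint of minimum weight; $\mathbb E[\mathrm{OPT}]$ is the expected minimum cost of a feasible query set. A vertex is mandatory for a realization if it belongs to every feasible query set; $p_u$ is the probability that $u$ is mandatory. (In a star, the center $v$ is mandatory iff $w_u\in I_v$ for some leaf $u$, and a leaf $u$ is mandatory iff $w_v\in I_u$.) *)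

theory Defs
  imports "HOL-Probability.Probability"
begin

definition min_support_interval :: "real measure \<Rightarrow> real set \<Rightarrow> bool" where
  "min_support_interval M J \<longleftrightarrow>
     is_interval J \<and> J \<in> sets borel \<and> measure M J = 1 \<and>
     (\<forall>J'. is_interval J' \<and> J' \<in> sets borel \<and> measure M J' = 1 \<longrightarrow> J \<subseteq> J')"

definition orientation_instance ::
  "'a set \<Rightarrow> 'a set set \<Rightarrow> ('a \<Rightarrow> real) \<Rightarrow> ('a \<Rightarrow> real measure) \<Rightarrow> ('a \<Rightarrow> real set) \<Rightarrow> bool" where
  "orientation_instance V E c d I \<longleftrightarrow>
     finite V \<and>
     (\<forall>e\<in>E. \<exists>x y. e = {x, y} \<and> x \<noteq> y \<and> x \<in> V \<and> y \<in> V) \<and>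
     (\<forall>u\<in>V. c u \<ge> 0 \<and> prob_space (d u) \<and> sets (d u) = sets borel \<and>
              (\<forall>x. measure (d u) {x} = 0) \<and> min_support_interval (d u) (I u)) \<and>
     (\<forall>e\<in>E. \<forall>x\<in>e. \<forall>y\<in>e. I x \<inter> I y \<noteq> {})"

definition consistent ::
  "'a set \<Rightarrow> ('a \<Rightarrow> real set) \<Rightarrow> 'a set \<Rightarrow> ('a \<Rightarrow> real) \<Rightarrow> ('a \<Rightarrow> real) \<Rightarrow> bool" where
  "consistent V I Q w w' \<longleftrightarrow> (\<forall>u\<in>Q. w' u = w u) \<and> (\<forall>u\<in>V - Q. w' u \<in> I u)"

definition feasible_query_set ::
  "'a set \<Rightarrow> 'a set set \<Rightarrow> ('a \<Rightarrow> real set) \<Rightarrow> ('a \<Rightarrow> real) \<Rightarrow> 'a set \<Rightarrow> bool" where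
  "feasible_query_set V E I w Q \<longleftrightarrow>
     Q \<subseteq> V \<and> (\<forall>e\<in>E. \<exists>x\<in>e. \<forall>w'. consistent V I Q w w' \<longrightarrow> (\<forall>y\<in>e. w' x \<le> w' y))"

definition mandatory ::
  "'a set \<Rightarrow> 'a set set \<Rightarrow> ('a \<Rightarrow> real set) \<Rightarrow> ('a \<Rightarrow> real) \<Rightarrow> 'a \<Rightarrow> bool" where
  "mandatory V E I w u \<longleftrightarrow> u \<in> V \<and> (\<forall>Q. feasible_query_set V E I w Q \<longrightarrow> u \<in> Q)"

definition opt_cost ::
  "'a set \<Rightarrow> 'a set set \<Rightarrow> ('a \<Rightarrow> real set) \<Rightarrow> ('a \<Rightarrow> real) \<Rightarrow> ('a \<Rightarrow> real) \<Rightarrow> real" where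
  "opt_cost V E I c w = Min {sum c Q | Q. feasible_query_set V E I w Q}"

definition expected_opt ::
  "'a set \<Rightarrow> 'a set set \<Rightarrow> ('a \<Rightarrow> real set) \<Rightarrow> ('a \<Rightarrow> real) \<Rightarrow> ('a \<Rightarrow> real measure) \<Rightarrow> real" where
  "expected_opt V E I c d = integral\<^sup>L (PiM V d) (opt_cost V E I c)"

definition mandatory_prob ::
  "'a set \<Rightarrow> 'a set set \<Rightarrow> ('a \<Rightarrow> real set) \<Rightarrow> ('a \<Rightarrow> real measure) \<Rightarrow> 'a \<Rightarrow> real" where
  "mandatory_prob V E I d u = measure (PiM V d) {w \<in> space (PiM V d). mandatory V E I w u}"

end

theory Submission
  imports Defs
begin

(* An atomless distribution has an open minimal support interval, so in a star a leaf u is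
   mandatory iff w_v is in I_u, and the center iff some w_u is in I_v.  With a(w) the cost of
   the mandatory leaves, OPT = c_v + a(w), except that OPT = min (c_v + a(w)) c(H) when the
   center is not mandatory.  Replacing this minimum by its chord over 0 <= a <= c(H) bounds OPT
   from below by an expression affine in a(w) and in the indicator that the center is not
   mandatory.  These two depend on disjoint coordinates, hence are independent, and so
     E[OPT] >= c_v + m - rho (c_v - k) - k rho m / c(H),
   where m = sum of p_u c_u, rho = 1 - p_v and k = min c_v c(H).  The hypothesis E[L] = E[R]
   reads c(H) = m + rho c_v, and then c_v + m is at most 4/3 of this bound: by AM-GM if
   c_v <= c(H), and by rho - rho^2 <= 1/4 otherwise. *)

section \<open>Minimal support intervals are open\<close>

lemma interval_nonmember_side:
  fixes S :: "real set"
  assumes "is_interval S" "x \<notin> S"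
  shows "(\<forall>y\<in>S. x \<le> y) \<or> (\<forall>y\<in>S. y \<le> x)"
  using assms unfolding is_interval_1 by (meson linear)

lemma open_real_between:
  fixes S :: "real set"
  assumes "open S" "z \<in> S"
  obtains a b where "a \<in> S" "b \<in> S" "a < z" "z < b"
proof -
  obtain e where "e > 0" "ball z e \<subseteq> S"
    using assms openE by blast
  then have "z - e / 2 \<in> S" "z + e / 2 \<in> S"
    by (auto simp: dist_real_def)
  with \<open>e > 0\<close> show ?thesis
    using that by simp
qed

lemma min_support_interval_open:
  assumes "prob_space M" "sets M = sets borel" "\<And>x. measure M {x} = 0"
    and "min_support_interval M J"
  shows "open J"
proof -
  interpret prob_space M by fact
  have J: "is_interval J" "J \<in> sets borel" "measure M J = 1"
    and J_least: "\<And>J'. is_interval J' \<Longrightarrow> J' \<in> sets borel \<Longrightarrow> measure M J' = 1 \<Longrightarrow> J \<subseteq> J'"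
    using assms(4) unfolding min_support_interval_def by auto
  \<comment> \<open>Atoms are null, so removing an endpoint would leave an interval of probability one.\<close>
  have cut: "J \<subseteq> J \<inter> T" if "is_interval T" "T \<in> sets borel" "J - {z} \<subseteq> T" for z T
  proof (rule J_least)
    have "{z} \<in> null_sets M"
      using assms(2,3) by (simp add: null_sets_def emeasure_eq_measure)
    then have "measure M (J - {z}) = 1"
      using J assms(2) by (simp add: measure_Diff_null_set)
    moreover have "measure M (J - {z}) \<le> measure M (J \<inter> T)"
      using J assms(2) that by (intro finite_measure_mono) auto
    ultimately show "measure M (J \<inter> T) = 1"
      using prob_le_1[of "J \<inter> T"] by linarith
  next
    show "is_interval (J \<inter> T)" using J(1) that(1) by (rule is_interval_Int)
    show "J \<inter> T \<in> sets borel" using J(2) that(2) by (rule sets.Int)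
  qed
  have between: "\<exists>a\<in>J. \<exists>b\<in>J. a < z \<and> z < b" if "z \<in> J" for z
  proof -
    have "\<exists>b\<in>J. z < b"
    proof (rule ccontr)
      assume "\<not> ?thesis"
      then have "J - {z} \<subseteq> {..<z}" by force
      then show False using cut[OF is_interval_io] \<open>z \<in> J\<close> by auto
    qed
    moreover have "\<exists>a\<in>J. a < z"
    proof (rule ccontr)
      assume "\<not> ?thesis"
      then have "J - {z} \<subseteq> {z<..}" by force
      then show False using cut[OF is_interval_oi] \<open>z \<in> J\<close> by auto
    qed
    ultimately show ?thesis by blast
  qed
  show ?thesis
  proof (rule Topological_Spaces.openI)
    fix z assume "z \<in> J"
    then obtain a b where "a \<in> J" "b \<in> J" "a < z" "z < b" using between by blast
    moreover have "{a<..<b} \<subseteq> J"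
      using J(1) \<open>a \<in> J\<close> \<open>b \<in> J\<close> unfolding is_interval_1 by fastforce
    ultimately show "\<exists>T. open T \<and> z \<in> T \<and> T \<subseteq> J"
      by (intro exI[of _ "{a<..<b}"]) auto
  qed
qed

section \<open>Orienting a single edge\<close>

definition min_endpoint_known ::
  "'a set \<Rightarrow> ('a \<Rightarrow> real set) \<Rightarrow> 'a set \<Rightarrow> ('a \<Rightarrow> real) \<Rightarrow> 'a set \<Rightarrow> bool" where
  "min_endpoint_known V I Q w e \<longleftrightarrow>
     (\<exists>x\<in>e. \<forall>w'. consistent V I Q w w' \<longrightarrow> (\<forall>y\<in>e. w' x \<le> w' y))"

lemma feasible_query_set_iff:
  "feasible_query_set V E I w Q \<longleftrightarrow> Q \<subseteq> V \<and> (\<forall>e\<in>E. min_endpoint_known V I Q w e)"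
  by (simp add: feasible_query_set_def min_endpoint_known_def)

lemma consistent_exists:
  assumes "\<And>x. x \<in> V - Q \<Longrightarrow> I x \<noteq> {}"
  obtains w' where "consistent V I Q w w'"
proof
  show "consistent V I Q w (\<lambda>x. if x \<in> Q then w x else SOME y. y \<in> I x)"
    using assms by (auto simp: consistent_def some_in_eq)
qed

lemma consistent_update:
  assumes "consistent V I Q w w'" "x \<in> V - Q" "r \<in> I x"
  shows "consistent V I Q w (w'(x := r))"
  using assms by (auto simp: consistent_def)

lemma min_endpoint_known_queried:
  assumes "x \<in> Q" "y \<in> Q"
  shows "min_endpoint_known V I Q w {x, y}"
proof (cases "w x \<le> w y")
  case True
  then show ?thesis
    using assms unfolding min_endpoint_known_def by (intro bexI[of _ x]) (auto simp: consistent_def)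
next
  case False
  then show ?thesis
    using assms unfolding min_endpoint_known_def by (intro bexI[of _ y]) (auto simp: consistent_def)
qed

lemma min_endpoint_known_half_queried:
  assumes "x \<in> Q" "y \<in> V - Q" "is_interval (I y)" "open (I y)"
    and nonempty: "\<And>z. z \<in> V - Q \<Longrightarrow> I z \<noteq> {}"
  shows "min_endpoint_known V I Q w {x, y} \<longleftrightarrow> w x \<notin> I y"
proof
  assume known: "min_endpoint_known V I Q w {x, y}"
  show "w x \<notin> I y"
  proof
    assume "w x \<in> I y"
    then obtain a b where ab: "a \<in> I y" "b \<in> I y" "a < w x" "w x < b"
      using assms(4) open_real_between by metis
    obtain w' where w': "consistent V I Q w w'"
      using consistent_exists nonempty by blast
    have "x \<noteq> y" "w' x = w x"
      using assms(1,2) w' by (auto simp: consistent_def)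
    moreover have "consistent V I Q w (w'(y := a))" "consistent V I Q w (w'(y := b))"
      using consistent_update[OF w' assms(2)] ab by auto
    ultimately show False
      using known ab unfolding min_endpoint_known_def by fastforce
  qed
next
  assume "w x \<notin> I y"
  then consider "\<forall>r\<in>I y. w x \<le> r" | "\<forall>r\<in>I y. r \<le> w x"
    using assms(3) interval_nonmember_side by blast
  then show "min_endpoint_known V I Q w {x, y}"
  proof cases
    case 1
    then show ?thesis
      using assms(1,2) unfolding min_endpoint_known_def by (intro bexI[of _ x]) (auto simp: consistent_def)
  next
    case 2
    then show ?thesis
      using assms(1,2) unfolding min_endpoint_known_def by (intro bexI[of _ y]) (auto simp: consistent_def)
  qed
qed

lemma min_endpoint_unknown_unqueried:
  assumes "x \<in> V - Q" "y \<in> V - Q" "x \<noteq> y" "open (I x)" "I x \<inter> I y \<noteq> {}"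
    and nonempty: "\<And>z. z \<in> V - Q \<Longrightarrow> I z \<noteq> {}"
  shows "\<not> min_endpoint_known V I Q w {x, y}"
proof
  assume known: "min_endpoint_known V I Q w {x, y}"
  obtain r where r: "r \<in> I x" "r \<in> I y"
    using assms(5) by blast
  then obtain a b where ab: "a \<in> I x" "b \<in> I x" "a < r" "r < b"
    using assms(4) open_real_between by metis
  obtain w' where w': "consistent V I Q w w'"
    using consistent_exists nonempty by blast
  have "consistent V I Q w (w'(x := a, y := r))" "consistent V I Q w (w'(x := b, y := r))"
    using consistent_update[OF consistent_update[OF w'] assms(2)] assms(1) ab r by auto
  then show False
    using known ab assms(3) unfolding min_endpoint_known_def by fastforce
qed

lemma measure_PiM_PiE:
  fixes d :: "'i \<Rightarrow> 'b measure"
  assumes "finite V" "\<And>i. i \<in> V \<Longrightarrow> prob_space (d i)" "\<And>i. i \<in> V \<Longrightarrow> X i \<in> sets (d i)"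
  shows "measure (PiM V d) (PiE V X) = (\<Prod>i\<in>V. measure (d i) (X i))"
proof -
  \<comment> \<open>The product locale wants a probability space at every index.\<close>
  define M where "M i = (if i \<in> V then d i else count_space {undefined})" for i
  interpret M: prob_space "M i" for i
    using assms(2) by (cases "i \<in> V") (auto simp: M_def intro!: prob_spaceI)
  interpret finite_product_prob_space M V
    by unfold_locales (rule assms(1))
  have "PiM V M = PiM V d"
    by (rule PiM_cong) (auto simp: M_def)
  moreover have "measure (PiM V M) (PiE V X) = (\<Prod>i\<in>V. measure (M i) (X i))"
    using assms(3) by (intro prob_times) (auto simp: M_def)
  ultimately show ?thesis
    by (simp add: M_def)
qed

text \<open>The left-hand side is the chord of the concave function \<open>a \<mapsto> min (cv + a) C\<close> over
  \<open>[0, C]\<close>.\<close>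

lemma chord_le_min:
  fixes a C cv :: real
  assumes "0 \<le> a" "a \<le> C" "0 \<le> cv"
  shows "a + min cv C - min cv C / C * a \<le> min (cv + a) C"
proof (cases "C = 0")
  case False
  then have "C > 0" using assms by auto
  have "min cv C * (C - a) \<le> C * (C - a)"
    using assms by (intro mult_right_mono) auto
  then have "min cv C / C * a \<ge> min cv C - (C - a)"
    using \<open>C > 0\<close> by (simp add: field_simps)
  moreover have "0 \<le> min cv C / C * a"
    using assms \<open>C > 0\<close> by auto
  ultimately show ?thesis by linarith
qed (use assms in auto)

lemma four_thirds_bound:
  fixes m cv r C :: real
  assumes "0 \<le> m" "0 \<le> cv" "0 \<le> r" "r \<le> 1" "C = m + r * cv"
  shows "cv + m \<le> 4 / 3 * (cv + m - r * (cv - min cv C) - min cv C / C * (r * m))"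
proof (cases "cv \<le> C")
  case True
  have "C * C - 4 * (r * cv * m) = (m - r * cv)\<^sup>2"
    unfolding assms(5) by (simp add: power2_eq_square algebra_simps)
  then have "4 * (r * cv * m) \<le> C * C"
    by (metis diff_ge_0_iff_ge zero_le_power2)
  have "4 * (r * cv * m / C) \<le> C"
  proof (cases "C = 0")
    case False
    then have "C > 0"
      using assms by (simp add: order_neq_le_trans)
    then show ?thesis
      using \<open>4 * (r * cv * m) \<le> C * C\<close> by (simp add: pos_divide_le_eq)
  qed simp
  moreover have "C \<le> cv + m"
    using assms(2-5) by (simp add: mult_left_le_one_le)
  ultimately have "4 * (r * cv * m / C) \<le> cv + m"
    by linarith
  moreover have "cv + m \<le> 4 / 3 * (cv + m - z)" if "4 * z \<le> cv + m" for z
    using that by (simp add: field_simps)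
  ultimately show ?thesis
    using True by (simp add: mult.commute mult.left_commute)
next
  case False
  have "r * (cv - C) + C / C * (r * m) = r * cv - r * r * cv"
  proof (cases "C = 0")
    case True
    then have "r * cv = 0"
      using assms by (simp add: add_nonneg_eq_0_iff)
    with True show ?thesis by simp
  qed (use assms(5) in \<open>simp add: algebra_simps\<close>)
  moreover have "0 \<le> cv * (1 - 2 * r)\<^sup>2"
    using assms(2) by simp
  then have "4 * (r * cv - r * r * cv) \<le> cv"
    by (simp add: power2_eq_square algebra_simps)
  then have "cv + m \<le> 4 / 3 * (cv + m - (r * cv - r * r * cv))"
    using assms(1) by (simp add: field_simps)
  ultimately show ?thesis
    using False by simp
qed

section \<open>Stars\<close>

locale star_instance =
  fixes v :: 'a and H :: "'a set" and c :: "'a \<Rightarrow> real"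
    and d :: "'a \<Rightarrow> real measure" and I :: "'a \<Rightarrow> real set"
  assumes center_notin_leaves: "v \<notin> H"
    and orientation: "orientation_instance (insert v H) ((\<lambda>u. {v, u}) ` H) c d I"
begin

abbreviation "V \<equiv> insert v H"
abbreviation "E \<equiv> (\<lambda>u. {v, u}) ` H"

lemma finite_leaves: "finite H"
  using orientation by (simp add: orientation_instance_def)

lemma vertex_props:
  assumes "x \<in> V"
  shows "0 \<le> c x" "prob_space (d x)" "sets (d x) = sets borel"
    and "\<And>r. measure (d x) {r} = 0" "min_support_interval (d x) (I x)"
  using assms orientation by (auto simp: orientation_instance_def)

lemma interval_props:
  assumes "x \<in> V"
  shows "is_interval (I x)" "open (I x)" "I x \<noteq> {}" "I x \<in> sets borel"
proof -
  have "prob_space (d x)" "measure (d x) (I x) = 1"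
    using vertex_props[OF assms] by (auto simp: min_support_interval_def)
  then show "I x \<noteq> {}" by auto
  show "open (I x)"
    using vertex_props(2-5)[OF assms] by (rule min_support_interval_open)
  show "is_interval (I x)" "I x \<in> sets borel"
    using vertex_props(5)[OF assms] by (auto simp: min_support_interval_def)
qed

lemma leaf_overlaps_center: "u \<in> H \<Longrightarrow> I v \<inter> I u \<noteq> {}"
  using orientation by (auto simp: orientation_instance_def)

lemma min_endpoint_known_star_edge:
  assumes "u \<in> H" "Q \<subseteq> V"
  shows "min_endpoint_known V I Q w {v, u} \<longleftrightarrow>
    (v \<in> Q \<or> u \<in> Q) \<and> (v \<in> Q \<and> u \<notin> Q \<longrightarrow> w v \<notin> I u) \<and> (u \<in> Q \<and> v \<notin> Q \<longrightarrow> w u \<notin> I v)"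
proof -
  have u: "u \<in> V" "u \<noteq> v"
    using assms(1) center_notin_leaves by auto
  have nonempty: "\<And>z. z \<in> V - Q \<Longrightarrow> I z \<noteq> {}"
    using interval_props by blast
  consider "v \<in> Q" "u \<in> Q" | "v \<in> Q" "u \<notin> Q" | "v \<notin> Q" "u \<in> Q" | "v \<notin> Q" "u \<notin> Q"
    by blast
  then show ?thesis
  proof cases
    case 1
    then show ?thesis by (simp add: min_endpoint_known_queried)
  next
    case 2
    have "min_endpoint_known V I Q w {v, u} \<longleftrightarrow> w v \<notin> I u"
      by (rule min_endpoint_known_half_queried) (use 2 u nonempty interval_props[of u] in auto)
    with 2 show ?thesis by simp
  next
    case 3
    have "min_endpoint_known V I Q w {u, v} \<longleftrightarrow> w u \<notin> I v"
      by (rule min_endpoint_known_half_queried) (use 3 u nonempty interval_props[of v] in auto)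
    with 3 show ?thesis by (simp add: insert_commute)
  next
    case 4
    have "\<not> min_endpoint_known V I Q w {v, u}"
      by (rule min_endpoint_unknown_unqueried)
        (use 4 u nonempty interval_props[of v] leaf_overlaps_center[OF assms(1)] in auto)
    with 4 show ?thesis by simp
  qed
qed

lemma feasible_star_iff:
  "feasible_query_set V E I w Q \<longleftrightarrow> Q \<subseteq> V \<and>
    (\<forall>u\<in>H. (v \<in> Q \<or> u \<in> Q) \<and> (v \<in> Q \<and> u \<notin> Q \<longrightarrow> w v \<notin> I u) \<and> (u \<in> Q \<and> v \<notin> Q \<longrightarrow> w u \<notin> I v))"
  by (auto simp: feasible_query_set_iff min_endpoint_known_star_edge)

lemma mandatory_leaf_iff:
  assumes "u \<in> H"
  shows "mandatory V E I w u \<longleftrightarrow> w v \<in> I u"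
proof
  assume "mandatory V E I w u"
  moreover have "feasible_query_set V E I w (V - {u})" if "w v \<notin> I u"
    using that assms center_notin_leaves by (auto simp: feasible_star_iff)
  ultimately show "w v \<in> I u"
    unfolding mandatory_def by blast
next
  assume "w v \<in> I u"
  then show "mandatory V E I w u"
    using assms by (auto simp: mandatory_def feasible_star_iff)
qed

lemma mandatory_center_iff: "mandatory V E I w v \<longleftrightarrow> (\<exists>u\<in>H. w u \<in> I v)"
proof
  assume "mandatory V E I w v"
  moreover have "feasible_query_set V E I w H" if "\<forall>u\<in>H. w u \<notin> I v"
    using that center_notin_leaves by (auto simp: feasible_star_iff)
  ultimately show "\<exists>u\<in>H. w u \<in> I v"
    using center_notin_leaves unfolding mandatory_def by blast
next
  assume "\<exists>u\<in>H. w u \<in> I v"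
  then show "mandatory V E I w v"
    by (auto simp: mandatory_def feasible_star_iff)
qed

definition mandatory_leaf_cost :: "('a \<Rightarrow> real) \<Rightarrow> real" where
  "mandatory_leaf_cost w = sum c {u\<in>H. w v \<in> I u}"

lemma mandatory_leaf_cost_bounds: "0 \<le> mandatory_leaf_cost w" "mandatory_leaf_cost w \<le> sum c H"
  using finite_leaves vertex_props(1) unfolding mandatory_leaf_cost_def
  by (auto intro!: sum_nonneg sum_mono2)

lemma feasible_cost_lower_bound:
  assumes "feasible_query_set V E I w Q"
  shows "(if \<exists>u\<in>H. w u \<in> I v then c v + mandatory_leaf_cost w
     else min (c v + mandatory_leaf_cost w) (sum c H)) \<le> sum c Q"
proof -
  have Q: "Q \<subseteq> V" "finite Q"
    using assms finite_leaves by (auto simp: feasible_star_iff finite_subset)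
  have mono: "sum c S \<le> sum c Q" if "S \<subseteq> Q" for S
    using that Q vertex_props(1) by (intro sum_mono2) auto
  show ?thesis
  proof (cases "v \<in> Q")
    case True
    then have "insert v {u\<in>H. w v \<in> I u} \<subseteq> Q"
      using assms by (auto simp: feasible_star_iff)
    then have "sum c (insert v {u\<in>H. w v \<in> I u}) \<le> sum c Q"
      by (rule mono)
    then have "c v + mandatory_leaf_cost w \<le> sum c Q"
      using finite_leaves center_notin_leaves by (simp add: mandatory_leaf_cost_def)
    then show ?thesis
      by (simp add: min.coboundedI1)
  next
    case False
    then have "H \<subseteq> Q" "\<forall>u\<in>H. w u \<notin> I v"
      using assms by (auto simp: feasible_star_iff)
    then show ?thesis
      using mono[of H] by (simp add: min.coboundedI2)
  qed
qed

lemma feasible_cost_attained: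
  obtains Q where "feasible_query_set V E I w Q"
    and "sum c Q = (if \<exists>u\<in>H. w u \<in> I v then c v + mandatory_leaf_cost w
           else min (c v + mandatory_leaf_cost w) (sum c H))"
proof (cases "(\<forall>u\<in>H. w u \<notin> I v) \<and> sum c H \<le> c v + mandatory_leaf_cost w")
  case True
  moreover have "feasible_query_set V E I w H"
    using True center_notin_leaves by (auto simp: feasible_star_iff)
  ultimately show ?thesis
    using that by auto
next
  case False
  then have "(if \<exists>u\<in>H. w u \<in> I v then c v + mandatory_leaf_cost w
      else min (c v + mandatory_leaf_cost w) (sum c H)) = c v + mandatory_leaf_cost w"
    by auto
  moreover have "feasible_query_set V E I w (insert v {u\<in>H. w v \<in> I u})"
    by (auto simp: feasible_star_iff)
  moreover have "sum c (insert v {u\<in>H. w v \<in> I u}) = c v + mandatory_leaf_cost w"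
    using finite_leaves center_notin_leaves by (simp add: mandatory_leaf_cost_def)
  ultimately show ?thesis
    using that by simp
qed

lemma opt_cost_star:
  "opt_cost V E I c w =
    (if \<exists>u\<in>H. w u \<in> I v then c v + mandatory_leaf_cost w
     else min (c v + mandatory_leaf_cost w) (sum c H))" (is "_ = ?opt")
proof -
  let ?costs = "{sum c Q | Q. feasible_query_set V E I w Q}"
  have "finite ?costs"
    using finite_leaves by (auto intro: finite_subset[of _ "sum c ` Pow V"] simp: feasible_star_iff)
  moreover have "?opt \<le> y" if "y \<in> ?costs" for y
    using that feasible_cost_lower_bound by blast
  moreover obtain Q where "feasible_query_set V E I w Q" "sum c Q = ?opt"
    by (rule feasible_cost_attained)
  then have "?opt \<in> ?costs"
    by (intro CollectI exI[of _ Q]) simp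
  ultimately show ?thesis
    unfolding opt_cost_def by (intro Min_eqI)
qed

abbreviation "P \<equiv> PiM V d"

lemma prob_space_P: "prob_space P"
  using vertex_props(2) by (rule prob_space_PiM)

lemma space_vertex: "x \<in> V \<Longrightarrow> space (d x) = UNIV"
  using sets_eq_imp_space_eq[OF vertex_props(3)] by simp

lemma measure_vertex_UNIV: "x \<in> V \<Longrightarrow> measure (d x) UNIV = 1"
  using vertex_props(2) space_vertex prob_space.prob_space by fastforce

lemma prod_measure_leaves_UNIV: "(\<Prod>u\<in>H. measure (d u) UNIV) = 1"
  using measure_vertex_UNIV by (intro prod.neutral) blast

text \<open>Every event needed below is a box of this shape, so its probability factorises.\<close>

definition star_event :: "real set \<Rightarrow> real set \<Rightarrow> ('a \<Rightarrow> real) set" where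
  "star_event A B = {w \<in> space P. w v \<in> A \<and> (\<forall>u\<in>H. w u \<in> B)}"

lemma space_P: "space P = PiE V (\<lambda>_. UNIV)"
  unfolding space_PiM using space_vertex by (intro PiE_cong) auto

lemma star_event_PiE: "star_event A B = PiE V (\<lambda>i. if i = v then A else B)"
  using center_notin_leaves by (auto simp: star_event_def space_P PiE_iff extensional_def split: if_splits)

lemma star_event_sets: "A \<in> sets borel \<Longrightarrow> B \<in> sets borel \<Longrightarrow> star_event A B \<in> sets P"
  unfolding star_event_PiE using finite_leaves vertex_props(3) by (intro sets_PiM_I_finite) auto

lemma measure_star_event:
  assumes "A \<in> sets borel" "B \<in> sets borel"
  shows "measure P (star_event A B) = measure (d v) A * (\<Prod>u\<in>H. measure (d u) B)"
proof -
  have "measure P (star_event A B) = (\<Prod>i\<in>V. measure (d i) (if i = v then A else B))"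
    unfolding star_event_PiE using finite_leaves vertex_props(2,3) assms
    by (intro measure_PiM_PiE) auto
  also have "\<dots> = measure (d v) A * (\<Prod>u\<in>H. measure (d u) B)"
    using finite_leaves center_notin_leaves by (auto intro!: prod.cong)
  finally show ?thesis .
qed

lemma mandatory_prob_leaf:
  assumes "u \<in> H"
  shows "mandatory_prob V E I d u = measure (d v) (I u)"
proof -
  have "{w \<in> space P. mandatory V E I w u} = star_event (I u) UNIV"
    using assms by (auto simp: star_event_def mandatory_leaf_iff)
  then show ?thesis
    using assms interval_props(4)
    by (simp add: mandatory_prob_def measure_star_event prod_measure_leaves_UNIV)
qed

lemma mandatory_prob_center:
  "mandatory_prob V E I d v = 1 - (\<Prod>u\<in>H. measure (d u) (- I v))"
proof -
  interpret prob_space P by (rule prob_space_P)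
  have "{w \<in> space P. mandatory V E I w v} = space P - star_event UNIV (- I v)"
    by (auto simp: star_event_def mandatory_center_iff)
  then show ?thesis
    using interval_props(4) star_event_sets
    by (simp add: mandatory_prob_def prob_compl measure_star_event borel_comp measure_vertex_UNIV)
qed

lemma star_event_subset_space: "star_event A B \<subseteq> space P"
  by (auto simp: star_event_def)

lemma indicator_star_event:
  "w \<in> space P \<Longrightarrow> indicator (star_event A B) w = of_bool (w v \<in> A \<and> (\<forall>u\<in>H. w u \<in> B))"
  by (simp add: star_event_def indicator_def)

lemma mandatory_leaf_cost_indicator:
  "w \<in> space P \<Longrightarrow> mandatory_leaf_cost w = (\<Sum>u\<in>H. c u * indicator (star_event (I u) UNIV) w)"
  unfolding mandatory_leaf_cost_def sum.inter_filter[OF finite_leaves]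
  by (auto simp: indicator_star_event intro: sum.cong)

lemma borel_measurable_mandatory_leaf_cost: "mandatory_leaf_cost \<in> borel_measurable P"
proof -
  have "(\<lambda>w. \<Sum>u\<in>H. c u * indicator (star_event (I u) UNIV) w) \<in> borel_measurable P"
    using star_event_sets interval_props(4) by measurable
  then show ?thesis
    by (rule measurable_cong[THEN iffD1, rotated]) (simp add: mandatory_leaf_cost_indicator)
qed

lemma integrable_opt_cost: "integrable P (opt_cost V E I c)"
proof -
  interpret prob_space P by (rule prob_space_P)
  let ?N = "star_event UNIV (- I v)"
  let ?f = "\<lambda>w. if w \<in> ?N then min (c v + mandatory_leaf_cost w) (sum c H)
    else c v + mandatory_leaf_cost w"
  have "?N \<in> sets P"
    using interval_props(4) by (intro star_event_sets) auto
  then have "?f \<in> borel_measurable P"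
    using borel_measurable_mandatory_leaf_cost by measurable
  moreover have "AE w in P. norm (?f w) \<le> c v + sum c H"
    using mandatory_leaf_cost_bounds order_trans[OF mandatory_leaf_cost_bounds] vertex_props(1)[of v]
    by (intro AE_I2) (auto simp: min_def)
  ultimately have "integrable P ?f"
    by (intro integrable_const_bound)
  moreover have "integrable P (opt_cost V E I c) \<longleftrightarrow> integrable P ?f"
    by (intro Bochner_Integration.integrable_cong) (auto simp: opt_cost_star star_event_def)
  ultimately show ?thesis
    by simp
qed

lemma opt_cost_lower_bound:
  assumes "w \<in> space P"
  defines "k \<equiv> min (c v) (sum c H)"
  shows "c v + mandatory_leaf_cost w - indicator (star_event UNIV (- I v)) w *
      (c v - k + k / sum c H * mandatory_leaf_cost w) \<le> opt_cost V E I c w"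
proof (cases "\<exists>u\<in>H. w u \<in> I v")
  case True
  then show ?thesis
    using assms by (auto simp: opt_cost_star indicator_star_event)
next
  case False
  then have "indicator (star_event UNIV (- I v)) w = (1 :: real)"
    using assms by (auto simp: indicator_star_event)
  then show ?thesis
    using False chord_le_min[OF mandatory_leaf_cost_bounds[of w] vertex_props(1)[of v]]
    by (simp add: opt_cost_star k_def)
qed

lemma star_event_Int: "star_event A B \<inter> star_event A' B' = star_event (A \<inter> A') (B \<inter> B')"
  by (auto simp: star_event_def)

lemma expected_opt_lower_bound:
  defines "C \<equiv> sum c H" and "k \<equiv> min (c v) (sum c H)"
    and "\<rho> \<equiv> \<Prod>u\<in>H. measure (d u) (- I v)" and "m \<equiv> \<Sum>u\<in>H. measure (d v) (I u) * c u"
  shows "c v + m - \<rho> * (c v - k) - k / C * (\<rho> * m) \<le> expected_opt V E I c d"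
proof -
  interpret prob_space P by (rule prob_space_P)
  let ?N = "star_event UNIV (- I v)"
  let ?A = "\<lambda>u. star_event (I u) UNIV"
  define G where
    "G = (\<lambda>w. c v + mandatory_leaf_cost w - indicator ?N w * (c v - k + k / C * mandatory_leaf_cost w))"
  have borel: "\<And>u. u \<in> H \<Longrightarrow> I u \<in> sets borel" "- I v \<in> sets borel"
    using interval_props(4) by auto
  have events: "?N \<in> sets P" "\<And>u. u \<in> H \<Longrightarrow> ?A u \<in> sets P"
    "\<And>u. u \<in> H \<Longrightarrow> ?A u \<inter> ?N \<in> sets P"
    using borel by (auto simp: star_event_Int intro: star_event_sets)
  have ind: "integrable P (indicator A :: _ \<Rightarrow> real)" if "A \<in> sets P" for A
    using that by (simp add: emeasure_eq_measure)
  have G_eq: "G w = c v + (\<Sum>u\<in>H. c u * indicator (?A u) w) - (c v - k) * indicator ?N w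
      - k / C * (\<Sum>u\<in>H. c u * indicator (?A u \<inter> ?N) w)" if "w \<in> space P" for w
    using that by (simp add: G_def mandatory_leaf_cost_indicator indicator_inter_arith
        sum_distrib_left sum_divide_distrib algebra_simps)
  have "integrable P G \<and> integral\<^sup>L P G = c v + m - \<rho> * (c v - k) - k / C * (\<rho> * m)"
    using events ind star_event_subset_space borel
    by (simp add: Bochner_Integration.integrable_cong[OF refl G_eq]
        Bochner_Integration.integral_cong[OF refl G_eq] m_def \<rho>_def Int_absorb2 star_event_Int
        measure_star_event measure_vertex_UNIV prod_measure_leaves_UNIV prob_space
        sum_distrib_left sum_distrib_right mult_ac)
  moreover have "G w \<le> opt_cost V E I c w" if "w \<in> space P" for w
    using opt_cost_lower_bound[OF that] by (simp add: G_def C_def k_def)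
  ultimately show ?thesis
    unfolding expected_opt_def using integrable_opt_cost by (metis integral_mono)
qed

end

theorem lemmaC1:
  fixes v :: 'a and H :: "'a set" and c :: "'a \<Rightarrow> real"
    and d :: "'a \<Rightarrow> real measure" and I :: "'a \<Rightarrow> real set"
  assumes "v \<notin> H"
    and "orientation_instance (insert v H) ((\<lambda>u. {v, u}) ` H) c d I"
    and "c v + (\<Sum>u\<in>H. mandatory_prob (insert v H) ((\<lambda>u. {v, u}) ` H) I d u * c u)
         = mandatory_prob (insert v H) ((\<lambda>u. {v, u}) ` H) I d v * c v + sum c H"
  shows "c v + (\<Sum>u\<in>H. mandatory_prob (insert v H) ((\<lambda>u. {v, u}) ` H) I d u * c u)
         \<le> 4 / 3 * expected_opt (insert v H) ((\<lambda>u. {v, u}) ` H) I c d"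
proof -
  interpret star_instance v H c d I
    using assms(1,2) by unfold_locales
  define \<rho> where "\<rho> = (\<Prod>u\<in>H. measure (d u) (- I v))"
  define m where "m = (\<Sum>u\<in>H. measure (d v) (I u) * c u)"
  have leaves: "(\<Sum>u\<in>H. mandatory_prob V E I d u * c u) = m"
    unfolding m_def by (intro sum.cong) (simp_all add: mandatory_prob_leaf)
  have "0 \<le> \<rho>" "\<rho> \<le> 1"
    unfolding \<rho>_def using vertex_props(2) by (auto intro!: prod_nonneg prod_le_1 prob_space.prob_le_1)
  moreover have "0 \<le> m"
    unfolding m_def using vertex_props(1) by (auto intro!: sum_nonneg)
  moreover have "sum c H = m + \<rho> * c v"
    using assms(3) unfolding leaves mandatory_prob_center \<rho>_def[symmetric] by (simp add: algebra_simps)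
  ultimately have "c v + m \<le> 4 / 3 * (c v + m - \<rho> * (c v - min (c v) (sum c H))
      - min (c v) (sum c H) / sum c H * (\<rho> * m))"
    using vertex_props(1)[of v] by (intro four_thirds_bound) auto
  also have "\<dots> \<le> 4 / 3 * expected_opt V E I c d"
    using expected_opt_lower_bound by (simp add: \<rho>_def m_def)
  finally show ?thesis
    by (simp add: leaves)
qed

end
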